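(* Let $A_1,\dots,A_m\in\mathbb{S}^n$, $b\in\mathbb{R}^m$, $C\in\mathbb{S}^n$, and let Assumption 1 hold for some $p$, with $m'$ the associated dimension. Let $Y\in\mathcal{M}_p$ be a second-order critical point of (P). If $\operatorname{rank}(Y)<p$, or if $\operatorname{rank}(Y)=p$ and $\dim\mathcal{F}_{YY^\top}<\frac{p(p+1)}{2}-m'+p$, then $Y$ is globally optimal for (P) and $X=YY^\top$ is globally optimal for (SDP).
   Context: $\mathbb{S}^n$ is the space of real symmetric $n\times n$ matrices; $\langle U,V\rangle=\operatorname{tr}(U^\top V)$. $\mathcal{A}:\mathbb{S}^n\to\mathbb{R}^m$, $\mathcal{A}(X)_i=\langle A_i,X\rangle$, adjoint $\mathcal{A}^*(\nu)=\sum_i\nu_iA_i$. (SDP): minimize $\langle C,X\rangle$ over $X\in\mathcal{C}=\{X\in\mathbb{S}^n:\mathcal{A}(X)=b,\ X\succeq0\}$ (assumed non-empty). $\mathcal{M}_p=\{Y\in\mathbb{R}^{n\times p}:\mathcal{A}(YY^\top)=b\}$; (P): minimize $g(Y)=\langle CY,Y\rangle$ over $\mathcal{M}_p$. Assumption 1 (for $p$ with $\mathcal{M}_p\ne\emptyset$): either (a) $A_1Y,\dots,A_mY$ are linearly independent for all $Y\in\mathcal{M}_p$, or (b) $\operatorname{span}\{A_1Y,\dots,A_mY\}$ has constant dimension for all $Y$ in an open neighborhood of $\mathcal{M}_p$ in $\mathbb{R}^{n\times p}$; in either case $m'$ denotes the dimension of $\operatorname{span}\{A_1Y,\dots,A_mY\}$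 for $Y\in\mathcal{M}_p$. For $Y\in\mathcal{M}_p$: $T_Y=\{\dot Y:\langle A_iY,\dot Y\rangle=0\ \forall i\}$; $G_{ij}=\langle A_iY,A_jY\rangle$; $\mu=G^\dagger\mathcal{A}(CYY^\top)$; $S(Y)=C-\mathcal{A}^*(\mu)$. $Y$ is second-order critical if $S(Y)Y=0$ and $\langle\dot Y,S(Y)\dot Y\rangle\ge0$ for all $\dot Y\in T_Y$. A face of the convex set $\mathcal{C}$ is a convex subset $\mathcal{F}\subseteq\mathcal{C}$ such that every closed segment in $\mathcal{C}$ with a relative interior point in $\mathcal{F}$ has both endpoints in $\mathcal{F}$; for $X\in\mathcal{C}$, $\mathcal{F}_X$ is the unique face of $\mathcal{C}$ containing $X$ in its relative interior, and its dimension is that of its affine hull. *)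

theory Defs
  imports "HOL-Analysis.Analysis"
begin

text \<open>Matrices are Cartesian-product types: n x p real matrices are real^'p^'n
 (row index 'n, column index 'p); the m constraints are indexed by a finite type 'm.\<close>

definition symmetric_mat :: "real^'n^'n \<Rightarrow> bool" where
  "symmetric_mat X \<longleftrightarrow> transpose X = X"

definition psd :: "real^'n^'n \<Rightarrow> bool" where
  "psd X \<longleftrightarrow> symmetric_mat X \<and> (\<forall>x. 0 \<le> x \<bullet> (X *v x))"

definition minner :: "real^'p^'n \<Rightarrow> real^'p^'n \<Rightarrow> real" where
  "minner U V = trace (transpose U ** V)"

definition Aop :: "('m \<Rightarrow> real^'n^'n) \<Rightarrow> real^'n^'n \<Rightarrow> real^'m" where
  "Aop A X = (\<chi> i. minner (A i) X)"

definition Aadj :: "('m::finite \<Rightarrow> real^'n^'n) \<Rightarrow> real^'m \<Rightarrow> real^'n^'n" where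
  "Aadj A \<nu> = (\<Sum>i\<in>UNIV. (\<nu> $ i) *\<^sub>R A i)"

definition SDP_set :: "('m \<Rightarrow> real^'n^'n) \<Rightarrow> real^'m \<Rightarrow> (real^'n^'n) set" where
  "SDP_set A b = {X. symmetric_mat X \<and> Aop A X = b \<and> psd X}"

definition Mp :: "('m \<Rightarrow> real^'n^'n) \<Rightarrow> real^'m \<Rightarrow> (real^'p^'n) set" where
  "Mp A b = {Y. Aop A (Y ** transpose Y) = b}"

definition gobj :: "real^'n^'n \<Rightarrow> real^'p^'n \<Rightarrow> real" where
  "gobj C Y = minner (C ** Y) Y"

definition tangent :: "('m \<Rightarrow> real^'n^'n) \<Rightarrow> real^'p^'n \<Rightarrow> (real^'p^'n) set" where
  "tangent A Y = {Yd. \<forall>i. minner (A i ** Y) Yd = 0}"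

definition gram :: "('m \<Rightarrow> real^'n^'n) \<Rightarrow> real^'p^'n \<Rightarrow> real^'m^'m" where
  "gram A Y = (\<chi> i j. minner (A i ** Y) (A j ** Y))"

definition pinv :: "real^'k^'k \<Rightarrow> real^'k^'k" where
  "pinv M = (THE P. M ** P ** M = M \<and> P ** M ** P = P \<and>
                    transpose (M ** P) = M ** P \<and> transpose (P ** M) = P ** M)"

definition mult_mu :: "('m \<Rightarrow> real^'n^'n) \<Rightarrow> real^'n^'n \<Rightarrow> real^'p^'n \<Rightarrow> real^'m" where
  "mult_mu A C Y = pinv (gram A Y) *v Aop A (C ** Y ** transpose Y)"

definition Smat :: "('m::finite \<Rightarrow> real^'n^'n) \<Rightarrow> real^'n^'n \<Rightarrow> real^'p^'n \<Rightarrow> real^'n^'n" where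
  "Smat A C Y = C - Aadj A (mult_mu A C Y)"

definition second_order_critical ::
  "('m::finite \<Rightarrow> real^'n^'n) \<Rightarrow> real^'n^'n \<Rightarrow> real^'p^'n \<Rightarrow> bool" where
  "second_order_critical A C Y \<longleftrightarrow>
     Smat A C Y ** Y = 0 \<and>
     (\<forall>Yd \<in> tangent A Y. 0 \<le> minner Yd (Smat A C Y ** Yd))"

definition AY_family :: "('m \<Rightarrow> real^'n^'n) \<Rightarrow> real^'p^'n \<Rightarrow> (real^'p^'n) set" where
  "AY_family A Y = (\<lambda>i. A i ** Y) ` UNIV"

definition AY_lin_indep :: "('m::finite \<Rightarrow> real^'n^'n) \<Rightarrow> real^'p^'n \<Rightarrow> bool" where
  "AY_lin_indep A Y \<longleftrightarrow>
     (\<forall>c::'m \<Rightarrow> real. (\<Sum>i\<in>UNIV. c i *\<^sub>R (A i ** Y)) = 0 \<longrightarrow> (\<forall>i. c i = 0))"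

text \<open>Assumption 1 (for the column count p = CARD('p), fixed by the type of Y).\<close>
definition assumption1 :: "('m::finite \<Rightarrow> real^'n^'n) \<Rightarrow> real^'m \<Rightarrow> ('p::finite) itself \<Rightarrow> bool" where
  "assumption1 A b _ \<longleftrightarrow>
     (\<forall>Y \<in> (Mp A b :: (real^'p^'n) set). AY_lin_indep A Y) \<or>
     (\<exists>U :: (real^'p^'n) set. open U \<and> Mp A b \<subseteq> U \<and>
        (\<exists>d. \<forall>Y\<in>U. dim (span (AY_family A Y)) = d))"

definition minimal_face :: "(real^'n^'n) set \<Rightarrow> real^'n^'n \<Rightarrow> (real^'n^'n) set" where
  "minimal_face K X = (THE F. F face_of K \<and> X \<in> rel_interior F)"

end

theory Submission
  imports Defs
begin

text \<open>
  Write \<open>S = S(Y)\<close> and \<open>\<mu> = \<mu>(Y)\<close>. Since \<open>C = S + \<A>\<^sup>*(\<mu>)\<close>, every feasible \<open>X\<close>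
  satisfies \<open>\<langle>C, X\<rangle> = \<langle>S, X\<rangle> + \<mu>\<^sup>T b\<close>, and \<open>\<langle>S, YY\<^sup>T\<rangle> = 0\<close> because \<open>SY = 0\<close>;
  so both optimality claims follow once \<open>S \<succeq> 0\<close>.  As \<open>SY = 0\<close>, the second-order condition
  at a tangent vector \<open>u z\<^sup>T + YW\<close> reads \<open>(u\<^sup>T S u) |z|\<^sup>2 \<ge> 0\<close>, so it suffices to find,
  for every \<open>u\<close>, some \<open>z \<noteq> 0\<close> and \<open>W\<close> with \<open>u z\<^sup>T + YW \<in> T\<^sub>Y\<close>.  If \<open>rank Y < p\<close>,
  take \<open>z \<in> ker Y\<close> and \<open>W = 0\<close>.  If \<open>rank Y = p\<close> and no such pair exists, the
  linearised constraint map is injective in \<open>z\<close> and its images of the \<open>u z\<^sup>T\<close> and of the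
  \<open>YW\<close> meet only in \<open>0\<close>, so the \<open>YW\<close> contribute at most \<open>m' - p\<close> dimensions.  Hence the
  symmetric \<open>W\<close> with \<open>\<A>(YWY\<^sup>T) = 0\<close> form a space of dimension at least
  \<open>p(p+1)/2 - m' + p\<close>; for small such \<open>W\<close> both \<open>Y(I \<plusminus> W)Y\<^sup>T\<close> are feasible, so this
  space embeds into the face \<open>\<F>\<^bsub>YY\<^sup>T\<^esub>\<close>, contradicting the dimension hypothesis.
\<close>

section \<open>Outer products and the trace inner product\<close>

definition outer :: "real^'n \<Rightarrow> real^'p \<Rightarrow> real^'p^'n" where
  "outer u z = (\<chi> i j. u$i * z$j)"

lemma inner_outer: "(M::real^'p^'n) \<bullet> outer v z = v \<bullet> (M *v z)"
  unfolding outer_def inner_vec_def matrix_vector_mult_def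
  by (simp add: sum_distrib_left mult_ac)

lemma inner_outer_outer: "outer u z \<bullet> outer v z = (u \<bullet> v) * (z \<bullet> z)"
  unfolding outer_def inner_vec_def
  by (simp add: sum_distrib_left sum_distrib_right mult_ac)

lemma matrix_mul_outer: "(S::real^'n^'m) ** outer u z = outer (S *v u) z"
  unfolding outer_def matrix_matrix_mult_def matrix_vector_mult_def
  by (simp add: vec_eq_iff sum_distrib_left mult_ac)

lemma outer_mult_vec: "outer c z *v x = (z \<bullet> x) *\<^sub>R c"
  unfolding outer_def inner_vec_def matrix_vector_mult_def
  by (simp add: vec_eq_iff sum_distrib_left mult_ac)

lemma linear_outer: "linear (outer u)"
  by (rule linearI) (simp_all add: outer_def vec_eq_iff algebra_simps)

lemma transpose_add: "transpose ((X::real^'n^'m) + Z) = transpose X + transpose Z"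
  by (simp add: transpose_def vec_eq_iff)

lemma transpose_zero [simp]: "transpose (0::real^'n^'m) = 0"
  by (simp add: transpose_def vec_eq_iff)

lemma subspace_symmetric_matrices: "subspace {W :: real^'n^'n. transpose W = W}"
  by (auto simp: subspace_def transpose_add transpose_scalar)

lemma matrix_add_rdistrib: "((B::real^'k^'n) + C) ** (Z::real^'q^'k) = B ** Z + C ** Z"
  by (simp add: matrix_matrix_mult_def vec_eq_iff sum.distrib algebra_simps)

lemma linear_matrix_mul_left: "linear (\<lambda>W::real^'q^'k. (Y::real^'k^'n) ** W)"
  by (rule linearI) (simp_all add: matrix_add_ldistrib matrix_scalar_ac scalar_matrix_assoc)

lemma minner_eq_inner: "minner U V = U \<bullet> V"
  unfolding minner_def trace_def inner_vec_def matrix_matrix_mult_def transpose_def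
  by (simp add: sum.swap[of _ "UNIV::'a set"])

lemma minner_sandwich:
  "minner (M::real^'n^'n) ((Y::real^'p^'n) ** W ** transpose Y) = minner (M ** Y) (Y ** W)"
proof -
  have "minner M (Y ** W ** transpose Y) = trace ((transpose M ** (Y ** W)) ** transpose Y)"
    by (simp add: minner_def matrix_mul_assoc)
  also have "\<dots> = trace (transpose Y ** (transpose M ** (Y ** W)))"
    by (rule trace_mul_sym)
  also have "\<dots> = minner (M ** Y) (Y ** W)"
    by (simp add: minner_def matrix_transpose_mul matrix_mul_assoc)
  finally show ?thesis .
qed

lemma gobj_eq_minner: "gobj C Z = minner C (Z ** transpose Z)"
  unfolding gobj_def minner_def
  by (metis matrix_transpose_mul matrix_mul_assoc trace_mul_sym)

section \<open>Positive semidefinite matrices\<close>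

lemma symmetric_mat_entry: "symmetric_mat X \<Longrightarrow> X$i$j = X$j$i"
  unfolding symmetric_mat_def transpose_def by (metis vec_lambda_beta)

lemma symmetric_mat_inner_swap:
  "symmetric_mat (X::real^'n^'n) \<Longrightarrow> y \<bullet> (X *v x) = x \<bullet> (X *v y)"
  unfolding symmetric_mat_def
  by (metis dot_lmul_matrix inner_commute transpose_matrix_vector)

lemma quadratic_form_add:
  "symmetric_mat (X::real^'n^'n) \<Longrightarrow>
   (x + y) \<bullet> (X *v (x + y)) = x \<bullet> (X *v x) + 2 * (y \<bullet> (X *v x)) + y \<bullet> (X *v y)"
  using symmetric_mat_inner_swap[of X x y]
  by (simp add: matrix_vector_right_distrib inner_add_left inner_add_right)

lemma psd_diagonal_nonneg:
  assumes "psd X"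
  shows "0 \<le> X$a$a"
proof -
  have "0 \<le> axis a 1 \<bullet> (X *v axis a 1)"
    using assms by (simp add: psd_def)
  then show ?thesis
    by (simp add: matrix_vector_mult_basis column_def inner_axis')
qed

lemma psd_zero_diagonal_row:
  assumes X: "psd X" and Xaa: "X$a$a = 0"
  shows "X$a$j = 0"
proof (rule ccontr)
  assume ne: "X$a$j \<noteq> 0"
  define t where "t = - (X$j$j + 1) / (2 * X$a$j)"
  have "0 \<le> (axis j 1 + t *\<^sub>R axis a 1) \<bullet> (X *v (axis j 1 + t *\<^sub>R axis a 1))"
    using X by (simp add: psd_def)
  also have "\<dots> = X$j$j + 2 * (t * X$a$j)"
    using X Xaa
    by (simp add: psd_def quadratic_form_add matrix_vector_mult_scaleR matrix_vector_mult_basis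
        column_def inner_axis')
  also have "\<dots> = -1"
    using ne by (simp add: t_def field_simps)
  finally show False by simp
qed

lemma psd_schur_complement:
  assumes X: "psd X" and pos: "0 < X$a$a"
  shows "psd (X - (1 / X$a$a) *\<^sub>R outer (column a X) (column a X))"
    (is "psd ?X'")
proof -
  define d where "d = X$a$a"
  define c where "c = column a X"
  have sX: "symmetric_mat X" using X by (simp add: psd_def)
  have "symmetric_mat ?X'"
    using symmetric_mat_entry[OF sX]
    by (simp add: symmetric_mat_def transpose_def vec_eq_iff outer_def column_def mult.commute)
  moreover have "0 \<le> x \<bullet> (?X' *v x)" for x
  proof -
    \<comment> \<open>the minimiser of the quadratic form of \<open>X\<close> along \<open>x + t e\<^sub>a\<close>\<close>
    define t where "t = - (c \<bullet> x) / d"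
    have cx: "(X *v x)$a = c \<bullet> x"
      using symmetric_mat_inner_swap[OF sX, of "axis a 1" x]
      by (simp add: c_def inner_axis' matrix_vector_mult_basis inner_commute)
    have "0 \<le> (x + t *\<^sub>R axis a 1) \<bullet> (X *v (x + t *\<^sub>R axis a 1))"
      using X by (simp add: psd_def)
    also have "\<dots> = x \<bullet> (X *v x) + 2 * (t * (c \<bullet> x)) + t * t * d"
      using cx by (simp add: quadratic_form_add[OF sX] matrix_vector_mult_scaleR
        matrix_vector_mult_basis column_def inner_axis' d_def)
    also have "\<dots> = x \<bullet> (X *v x) - (c \<bullet> x) * (c \<bullet> x) / d"
      using pos by (simp add: t_def d_def field_simps)
    also have "\<dots> = x \<bullet> (?X' *v x)"
      by (simp add: c_def d_def matrix_vector_mult_diff_rdistrib outer_mult_vec inner_diff_right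
          scaleR_matrix_vector_assoc[symmetric] inner_commute)
    finally show ?thesis .
  qed
  ultimately show ?thesis by (simp add: psd_def)
qed

text \<open>
  Induction on the set of nonzero rows of \<open>X\<close>: a zero diagonal entry forces a zero row, and
  otherwise \<open>X\<close> is a rank-one psd term \<open>c c\<^sup>T / X\<^sub>a\<^sub>a\<close> plus its Schur complement,
  whose row \<open>a\<close> vanishes.
\<close>

lemma inner_psd_nonneg_supported:
  fixes S X :: "real^'n^'n"
  assumes K: "finite K" and S: "psd S"
    and X: "psd X" and supp: "\<And>i j. i \<notin> K \<Longrightarrow> X$i$j = 0"
  shows "0 \<le> S \<bullet> X"
  using K X supp
proof (induction K arbitrary: X rule: finite_induct)
  case empty
  then have "X = 0" by (simp add: vec_eq_iff)
  then show ?case by simp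
next
  case (insert a K)
  have sX: "symmetric_mat X" using insert.prems(1) by (simp add: psd_def)
  have "0 \<le> X$a$a"
    using insert.prems(1) by (rule psd_diagonal_nonneg)
  then consider "X$a$a = 0" | "0 < X$a$a" by linarith
  then show ?case
  proof cases
    case 1
    then show ?thesis
      using insert psd_zero_diagonal_row[OF insert.prems(1) 1] by (metis insertE)
  next
    case 2
    define c where "c = column a X"
    define X' where "X' = X - (1 / X$a$a) *\<^sub>R outer c c"
    have "X'$i$j = 0" if "i \<notin> K" for i j
    proof (cases "i = a")
      case True
      then show ?thesis
        using 2 symmetric_mat_entry[OF sX, of j a] by (simp add: X'_def outer_def c_def column_def)
    next
      case False
      then show ?thesis
        using that insert.prems(2) by (simp add: X'_def outer_def c_def column_def)
    qed
    then have "0 \<le> S \<bullet> X'"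
      using insert.IH psd_schur_complement[OF insert.prems(1) 2] by (simp add: X'_def c_def)
    moreover have "0 \<le> c \<bullet> (S *v c) / X$a$a"
      using S 2 by (simp add: psd_def)
    moreover have "S \<bullet> X = S \<bullet> X' + c \<bullet> (S *v c) / X$a$a"
      by (simp add: X'_def inner_diff_right inner_outer)
    ultimately show ?thesis by linarith
  qed
qed

lemma inner_psd_nonneg: "psd (S::real^'n^'n) \<Longrightarrow> psd X \<Longrightarrow> 0 \<le> S \<bullet> X"
  using inner_psd_nonneg_supported[of UNIV S X] by simp

lemma norm_matrix_vector_mult_le: "norm ((W::real^'n^'m) *v w) \<le> norm W * norm w"
proof (rule power2_le_imp_le)
  have "(norm (W *v w))\<^sup>2 = (W *v w) \<bullet> (W *v w)"
    by (rule power2_norm_eq_inner)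
  also have "\<dots> = (\<Sum>i\<in>UNIV. (W$i \<bullet> w)\<^sup>2)"
    by (simp add: inner_vec_def matrix_mult_dot power2_eq_square)
  also have "\<dots> \<le> (\<Sum>i\<in>UNIV. (norm (W$i))\<^sup>2 * (norm w)\<^sup>2)"
    by (intro sum_mono) (metis Cauchy_Schwarz_ineq2 abs_le_square_iff abs_mult abs_norm_cancel power_mult_distrib)
  also have "\<dots> = (norm W * norm w)\<^sup>2"
    by (simp add: power2_norm_eq_inner inner_vec_def power_mult_distrib sum_distrib_right)
  finally show "(norm (W *v w))\<^sup>2 \<le> (norm W * norm w)\<^sup>2" .
qed simp

lemma psd_mat_1_plus:
  assumes sym: "transpose W = W" and small: "norm (W::real^'n^'n) \<le> 1"
  shows "psd (mat 1 + W)"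
proof -
  have "0 \<le> x \<bullet> ((mat 1 + W) *v x)" for x
  proof -
    have "\<bar>x \<bullet> (W *v x)\<bar> \<le> norm x * (norm W * norm x)"
      using Cauchy_Schwarz_ineq2[of x "W *v x"] norm_matrix_vector_mult_le[of W x]
      by (meson mult_left_mono norm_ge_zero order_trans)
    also have "\<dots> \<le> norm x * norm x"
      using small by (simp add: mult_left_mono mult_left_le_one_le)
    also have "\<dots> = x \<bullet> x"
      by (simp add: power2_norm_eq_inner[symmetric] power2_eq_square)
    finally show ?thesis
      by (simp add: matrix_vector_mult_add_rdistrib inner_add_right)
  qed
  then show ?thesis
    using sym by (simp add: psd_def symmetric_mat_def transpose_add)
qed

lemma psd_congruence:
  assumes "psd M"
  shows "psd ((Y::real^'p^'n) ** M ** transpose Y)"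
proof -
  have "x \<bullet> ((Y ** M ** transpose Y) *v x) = (transpose Y *v x) \<bullet> (M *v (transpose Y *v x))" for x
    by (simp add: matrix_vector_mul_assoc[symmetric] dot_lmul_matrix[symmetric])
  then show ?thesis
    using assms
    by (simp add: psd_def symmetric_mat_def matrix_transpose_mul matrix_mul_assoc)
qed

section \<open>Dimension counts\<close>

lemma card_subsets_card_1_or_2:
  fixes U :: "'a set"
  assumes "finite U"
  shows "2 * card {A. A \<subseteq> U \<and> (card A = 1 \<or> card A = 2)} = card U * (card U + 1)"
proof -
  have "{A. A \<subseteq> U \<and> (card A = 1 \<or> card A = 2)} =
        {A. A \<subseteq> U \<and> card A = 1} \<union> {A. A \<subseteq> U \<and> card A = 2}" by auto
  moreover have "card \<dots> = card U + (card U choose 2)"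
    using assms by (subst card_Un_disjoint) (auto simp: n_subsets)
  moreover have "2 * (k choose 2) = k * (k - 1)" for k :: nat
    by (cases k) (simp_all add: choose_two)
  ultimately show ?thesis
    by (cases "card U") (simp_all add: algebra_simps)
qed

lemma dim_symmetric_matrices_ge:
  "CARD('p) * (CARD('p) + 1) \<le> 2 * dim {W :: real^'p::finite^'p. transpose W = W}"
proof -
  define P :: "'p set set" where "P = {A. A \<subseteq> UNIV \<and> (card A = 1 \<or> card A = 2)}"
  define E :: "'p set \<Rightarrow> real^'p^'p" where "E A = (\<chi> i j. if {i, j} = A then 1 else 0)" for A
  have E_nonzero: "E A \<noteq> 0" if "A \<in> P" for A
  proof -
    have "card A = 1 \<or> card A = 2" using that by (simp add: P_def)
    then obtain i j where "A = {i, j}"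
    proof (elim disjE)
      assume "card A = 1"
      then obtain i where "A = {i}" by (auto simp: card_1_singleton_iff)
      then show thesis using that[of i i] by simp
    qed (auto simp: card_2_iff)
    then have "E A $ i $ j = 1" by (simp add: E_def)
    then show ?thesis by auto
  qed
  have E_orth: "E A \<bullet> E B = 0" if "A \<noteq> B" for A B
  proof -
    have "E A $ i $ j * E B $ i $ j = 0" for i j
      using that by (simp add: E_def)
    then show ?thesis by (auto simp: inner_vec_def intro!: sum.neutral)
  qed
  have inj: "inj_on E P"
    using E_nonzero E_orth by (metis inj_onI inner_eq_zero_iff)
  have indep: "independent (E ` P)"
  proof (rule pairwise_orthogonal_independent)
    show "pairwise orthogonal (E ` P)"
      by (auto simp: pairwise_def orthogonal_def intro: E_orth)
    show "0 \<notin> E ` P"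
      using E_nonzero by auto
  qed
  have sym: "E ` P \<subseteq> {W. transpose W = W}"
    by (auto simp: E_def transpose_def vec_eq_iff insert_commute)
  have "dim (E ` P) = card P"
    using dim_eq_card_independent[OF indep] card_image[OF inj] by simp
  then have "2 * dim (E ` P) = CARD('p) * (CARD('p) + 1)"
    using card_subsets_card_1_or_2[of "UNIV :: 'p set"] by (simp add: P_def)
  moreover have "dim (E ` P) \<le> dim {W :: real^'p^'p. transpose W = W}"
    by (rule dim_subset[OF sym])
  ultimately show ?thesis by linarith
qed

lemma dim_le_dim_kernel_add_dim_image:
  fixes f :: "'a::euclidean_space \<Rightarrow> 'b::euclidean_space"
  assumes S: "subspace S" and f: "linear f"
  shows "dim S \<le> dim (S \<inter> {x. f x = 0}) + dim (f ` S)"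
proof -
  define K where "K = S \<inter> {x. f x = 0}"
  define S' where "S' = {x \<in> S. \<forall>k\<in>K. orthogonal x k}"
  have K: "subspace K"
    unfolding K_def using S f by (auto simp: subspace_def linear_0 linear_add linear_scale)
  have S': "subspace S'"
    using S unfolding S'_def subspace_def orthogonal_def by (auto simp: inner_add_left)
  have "S \<subseteq> {x + y |x y. x \<in> K \<and> y \<in> S'}"
  proof
    fix x assume "x \<in> S"
    obtain y z where y: "y \<in> span K" and z: "\<And>w. w \<in> span K \<Longrightarrow> orthogonal z w"
      and xyz: "x = y + z"
      using orthogonal_subspace_decomp_exists[of K x] by blast
    have "y \<in> K" using y K by (simp add: span_eq_iff[THEN iffD2])
    have "z \<in> S"
      using subspace_diff[OF S \<open>x \<in> S\<close>, of y] xyz \<open>y \<in> K\<close> by (simp add: K_def)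
    moreover have "orthogonal z k" if "k \<in> K" for k
      using z[OF span_base[OF that]] .
    ultimately have "z \<in> S'"
      by (simp add: S'_def)
    then show "x \<in> {x + y |x y. x \<in> K \<and> y \<in> S'}" using xyz \<open>y \<in> K\<close> by blast
  qed
  then have "dim S \<le> dim {x + y |x y. x \<in> K \<and> y \<in> S'}" by (rule dim_subset)
  also have "\<dots> \<le> dim K + dim S'" using dim_sums_Int[OF K S'] by linarith
  also have "dim S' = dim (f ` S')"
  proof (rule dim_image_eq[symmetric, OF f])
    show "inj_on f (span S')"
    proof (rule inj_onI)
      fix x y assume "x \<in> span S'" "y \<in> span S'" and "f x = f y"
      then have "x - y \<in> S'"
        using S' by (simp add: span_eq_iff[THEN iffD2] subspace_diff)
      moreover have "f (x - y) = 0"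
        using \<open>f x = f y\<close> by (simp add: linear_diff[OF f])
      ultimately have "orthogonal (x - y) (x - y)"
        by (simp add: S'_def K_def)
      then show "x = y" by (simp add: orthogonal_def)
    qed
  qed
  also have "dim (f ` S') \<le> dim (f ` S)"
    by (rule dim_subset) (auto simp: S'_def)
  finally show ?thesis by (simp add: K_def)
qed

lemma dim_add_dim_range_le:
  fixes f :: "'a::euclidean_space \<Rightarrow> 'c::euclidean_space" and g :: "'b::euclidean_space \<Rightarrow> 'c"
  assumes f: "linear f" and g: "linear g" and only_zero: "\<And>z w. f z + g w = 0 \<Longrightarrow> z = 0"
  shows "DIM('a) + dim (range g) \<le> dim {x + y |x y. x \<in> range f \<and> y \<in> range g}"
proof -
  have "range f \<inter> range g \<subseteq> {0}"
  proof
    fix v assume "v \<in> range f \<inter> range g"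
    then obtain z w where "v = f z" "v = g w" by blast
    then have "f z + g (- w) = 0" using linear_neg[OF g] by simp
    then have "z = 0" by (rule only_zero)
    then show "v \<in> {0}" using \<open>v = f z\<close> linear_0[OF f] by simp
  qed
  then have trivial_Int: "dim (range f \<inter> range g) = 0" by (simp add: dim_eq_0)
  have "inj f"
    unfolding linear_inj_iff_eq_0[OF f] using only_zero[of _ 0] linear_0[OF g] by simp
  then have "dim (range f) = DIM('a)"
    using dim_image_eq[OF f, of UNIV] by (simp add: inj_on_def inj_def)
  then show ?thesis
    using trivial_Int
      dim_sums_Int[OF linear_subspace_image[OF f subspace_UNIV] linear_subspace_image[OF g subspace_UNIV]]
    by linarith
qed

lemma dim_range_inner_family_le:
  fixes v :: "'m::finite \<Rightarrow> 'a::euclidean_space"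
  shows "dim (range (\<lambda>x. \<chi> i. v i \<bullet> x) :: (real^'m) set) \<le> dim (span (range v))"
proof -
  define G :: "'a \<Rightarrow> real^'m" where "G x = (\<chi> i. v i \<bullet> x)" for x
  have G: "linear G"
    unfolding G_def by (rule linearI) (simp_all add: vec_eq_iff inner_add_right)
  have "range G \<subseteq> G ` span (range v)"
  proof clarify
    fix x
    obtain y w where y: "y \<in> span (range v)" and w: "\<And>u. u \<in> span (range v) \<Longrightarrow> orthogonal w u"
      and xyw: "x = y + w"
      using orthogonal_subspace_decomp_exists[of "range v" x] by blast
    have "G w = 0"
      unfolding G_def vec_eq_iff using w[OF span_base[OF rangeI]]
      by (simp add: orthogonal_def inner_commute)
    then have "G x = G y" using xyw linear_add[OF G] by simp
    then show "G x \<in> G ` span (range v)" using y by blast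
  qed
  then have "dim (range G) \<le> dim (G ` span (range v))" by (rule dim_subset)
  also have "\<dots> \<le> dim (span (range v))" by (rule dim_image_le[OF G])
  finally show ?thesis by (simp add: G_def)
qed

section \<open>Faces of convex sets\<close>

lemma exists_face_rel_interior:
  fixes S :: "'a::euclidean_space set"
  assumes S: "convex S" and x: "x \<in> S"
  shows "\<exists>F. F face_of S \<and> x \<in> rel_interior F"
proof -
  have "\<exists>F. (F face_of S \<and> x \<in> F) \<and>
          (\<forall>G. G face_of S \<and> x \<in> G \<longrightarrow> nat (aff_dim F) \<le> nat (aff_dim G))"
    by (rule ex_has_least_nat[of _ S]) (simp add: face_of_refl[OF S] x)
  then obtain F where F: "F face_of S" "x \<in> F"
    and least: "\<And>G. G face_of S \<Longrightarrow> x \<in> G \<Longrightarrow> nat (aff_dim F) \<le> nat (aff_dim G)"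
    by blast
  have "x \<in> rel_interior F"
  proof (rule ccontr)
    assume "x \<notin> rel_interior F"
    have cF: "convex F" using F(1) face_of_imp_convex by blast
    obtain a where "a \<noteq> 0" and le: "\<And>y. y \<in> F \<Longrightarrow> a \<bullet> x \<le> a \<bullet> y"
      and lt: "\<And>y. y \<in> rel_interior F \<Longrightarrow> a \<bullet> x < a \<bullet> y"
      using supporting_hyperplane_rel_boundary[OF cF F(2) \<open>x \<notin> rel_interior F\<close>] by blast
    define G where "G = F \<inter> {y. a \<bullet> y = a \<bullet> x}"
    have GF: "G face_of F"
      unfolding G_def by (intro face_of_Int_supporting_hyperplane_ge[OF cF] le)
    have "rel_interior F \<noteq> {}"
      using rel_interior_eq_empty[OF cF] F(2) by auto
    then obtain y where y: "y \<in> rel_interior F" by blast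
    then have "y \<in> F - G"
      using lt[OF y] rel_interior_subset by (auto simp: G_def)
    then have "G \<noteq> F" by blast
    then have "aff_dim G < aff_dim F" using face_of_aff_dim_lt[OF cF GF] by blast
    moreover have "x \<in> G" using F(2) by (simp add: G_def)
    moreover have "G face_of S" using face_of_trans[OF GF F(1)] .
    moreover have "0 \<le> aff_dim G"
      using \<open>x \<in> G\<close> aff_dim_negative_iff[of G] by (metis empty_iff not_less)
    ultimately show False
      using least[of G] by linarith
  qed
  then show ?thesis using F(1) by blast
qed

lemma minimal_face_rel_interior:
  fixes K :: "(real^'n^'n) set"
  assumes "convex K" "X \<in> K"
  shows "minimal_face K X face_of K \<and> X \<in> rel_interior (minimal_face K X)"
proof -
  obtain F where F: "F face_of K \<and> X \<in> rel_interior F"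
    using exists_face_rel_interior[OF assms] by blast
  have "\<exists>!F. F face_of K \<and> X \<in> rel_interior F"
  proof (rule ex1I[of _ F])
    show "\<And>G. G face_of K \<and> X \<in> rel_interior G \<Longrightarrow> G = F"
      using F face_of_eq[of _ K F] by blast
  qed (rule F)
  then show ?thesis unfolding minimal_face_def by (rule theI')
qed

lemma dim_le_aff_dim_face:
  fixes L :: "'a::euclidean_space \<Rightarrow> 'b::euclidean_space"
  assumes F: "F face_of K" and x: "x \<in> F" and V: "subspace V"
    and L: "linear L" "inj L" and e: "0 < e"
    and near: "\<And>v. v \<in> V \<Longrightarrow> norm v < e \<Longrightarrow> x + L v \<in> K"
  shows "int (dim V) \<le> aff_dim F"
proof -
  have "x + L v \<in> F" if v: "v \<in> V" "norm v < e" for v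
  proof (cases "L v = 0")
    case True
    then show ?thesis using x by simp
  next
    case False
    have "x - L v \<in> K"
      using near[of "- v"] v subspace_neg[OF V] linear_neg[OF L(1)] by simp
    moreover have "x \<in> open_segment (x + L v) (x - L v)"
      using False midpoint_in_open_segment[of "x + L v" "x - L v"]
      by (simp add: midpoint_def algebra_simps flip: scaleR_2)
    ultimately show ?thesis
      using face_ofD[OF F _ near[OF v] _ x] by blast
  qed
  then have sub: "(\<lambda>v. x + L v) ` (V \<inter> ball 0 e) \<subseteq> F" by auto
  have "(\<lambda>v. x + L v) ` (V \<inter> ball 0 e) = (+) x ` (L ` (V \<inter> ball 0 e))" by auto
  then have "aff_dim ((\<lambda>v. x + L v) ` (V \<inter> ball 0 e)) = aff_dim (V \<inter> ball 0 e)"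
    using L by (simp add: aff_dim_translation_eq)
  also have "\<dots> = aff_dim V"
    using subspace_0[OF V] e
    by (intro aff_dim_convex_Int_open subspace_imp_convex[OF V]) auto
  also have "\<dots> = int (dim V)" by (rule aff_dim_subspace[OF V])
  finally show ?thesis using aff_dim_subset[OF sub] by simp
qed

section \<open>The semidefinite program and its factorisation\<close>

text \<open>\<open>constraint_diff A Y\<close> is half the differential of \<open>Y \<mapsto> \<A>(YY\<^sup>T)\<close> at \<open>Y\<close>.\<close>

definition constraint_diff :: "('m \<Rightarrow> real^'n^'n) \<Rightarrow> real^'p^'n \<Rightarrow> real^'p^'n \<Rightarrow> real^'m" where
  "constraint_diff A Y D = (\<chi> i. (A i ** Y) \<bullet> D)"

lemma tangent_eq_kernel: "tangent A Y = {D. constraint_diff A Y D = 0}"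
  by (simp add: tangent_def constraint_diff_def minner_eq_inner vec_eq_iff)

lemma linear_constraint_diff: "linear (constraint_diff A Y)"
  unfolding constraint_diff_def by (rule linearI) (simp_all add: vec_eq_iff inner_add_right)

lemma dim_range_constraint_diff_le:
  fixes A :: "'m::finite \<Rightarrow> real^'n^'n"
  shows "dim (range (constraint_diff A Y)) \<le> dim (span (AY_family A Y))"
  using dim_range_inner_family_le[of "\<lambda>i. A i ** Y"]
  by (simp add: constraint_diff_def[abs_def] AY_family_def)

lemma Smat_symmetric:
  assumes "\<forall>i. symmetric_mat (A i)" "symmetric_mat C"
  shows "symmetric_mat (Smat A C Y)"
  using assms unfolding symmetric_mat_def Smat_def Aadj_def
  by (simp add: vec_eq_iff transpose_def sum_component)

lemma SDP_set_convex: "convex (SDP_set (A :: 'm::finite \<Rightarrow> real^'n^'n) b)"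
proof (rule convexI)
  fix X Z :: "real^'n^'n" and s t :: real
  assume X: "X \<in> SDP_set A b" and Z: "Z \<in> SDP_set A b" and st: "0 \<le> s" "0 \<le> t" "s + t = 1"
  have "Aop A (s *\<^sub>R X + t *\<^sub>R Z) = s *\<^sub>R Aop A X + t *\<^sub>R Aop A Z"
    by (simp add: Aop_def vec_eq_iff minner_eq_inner inner_add_right)
  also have "\<dots> = b"
    using X Z st by (simp add: SDP_set_def flip: scaleR_add_left)
  finally have "Aop A (s *\<^sub>R X + t *\<^sub>R Z) = b" .
  moreover have "0 \<le> x \<bullet> ((s *\<^sub>R X + t *\<^sub>R Z) *v x)" for x
    using X Z st
    by (simp add: SDP_set_def psd_def matrix_vector_mult_add_rdistrib
        scaleR_matrix_vector_assoc[symmetric] inner_add_right)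
  ultimately show "s *\<^sub>R X + t *\<^sub>R Z \<in> SDP_set A b"
    using X Z by (simp add: SDP_set_def psd_def symmetric_mat_def transpose_add transpose_scalar)
qed

lemma sandwich_in_SDP_set:
  assumes Y: "Y \<in> Mp A b" and W: "transpose W = W" "constraint_diff A Y (Y ** W) = 0"
    and small: "norm W \<le> 1"
  shows "Y ** (mat 1 + W) ** transpose Y \<in> SDP_set A b"
proof -
  have "psd (Y ** (mat 1 + W) ** transpose Y)"
    by (intro psd_congruence psd_mat_1_plus W(1) small)
  moreover have "minner (A i) (Y ** (mat 1 + W) ** transpose Y) = minner (A i) (Y ** transpose Y)" for i
  proof -
    have "(A i ** Y) \<bullet> (Y ** W) = 0"
      using W(2) by (simp add: constraint_diff_def vec_eq_iff)
    then show ?thesis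
      using minner_sandwich[of "A i" Y "mat 1 + W"] minner_sandwich[of "A i" Y "mat 1"]
      by (simp add: matrix_add_ldistrib minner_eq_inner inner_add_right)
  qed
  then have "Aop A (Y ** (mat 1 + W) ** transpose Y) = b"
    using Y by (simp add: Aop_def Mp_def)
  ultimately show ?thesis by (simp add: SDP_set_def psd_def)
qed

lemma outer_in_SDP_set: "Y \<in> Mp A b \<Longrightarrow> Y ** transpose Y \<in> SDP_set A b"
  using sandwich_in_SDP_set[of Y A b 0]
  by (simp add: linear_0[OF linear_constraint_diff])

lemma dim_symmetric_kernel_le_aff_dim_face:
  fixes A :: "'m::finite \<Rightarrow> real^'n^'n" and Y :: "real^'p^'n"
  assumes Y: "Y \<in> Mp A b" and injY: "inj ((*v) Y)"
  shows "int (dim {W. transpose W = W \<and> constraint_diff A Y (Y ** W) = 0})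
           \<le> aff_dim (minimal_face (SDP_set A b) (Y ** transpose Y))"
proof -
  define V where "V = {W :: real^'p^'p. transpose W = W \<and> constraint_diff A Y (Y ** W) = 0}"
  define L where "L W = Y ** W ** transpose Y" for W :: "real^'p^'p"
  have "subspace {W :: real^'p^'p. constraint_diff A Y (Y ** W) = 0}"
    using linear_subspace_kernel[OF linear_compose[OF linear_matrix_mul_left linear_constraint_diff]]
    by (simp add: o_def)
  then have V: "subspace V"
    unfolding V_def Collect_conj_eq by (rule subspace_inter[OF subspace_symmetric_matrices])
  have L: "linear L"
    unfolding L_def
    by (rule linearI) (simp_all add: matrix_add_ldistrib matrix_add_rdistrib matrix_scalar_ac scalar_matrix_assoc)
  obtain B where B: "B ** Y = mat 1"
    using injY matrix_left_invertible_injective by blast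
  have "B ** L W ** transpose B = (B ** Y) ** W ** transpose (B ** Y)" for W
    by (simp add: L_def matrix_mul_assoc matrix_transpose_mul)
  then have "B ** L W ** transpose B = W" for W
    by (simp add: B)
  then have "inj L" by (metis injI)
  have F: "minimal_face (SDP_set A b) (Y ** transpose Y) face_of SDP_set A b"
    and X: "Y ** transpose Y \<in> minimal_face (SDP_set A b) (Y ** transpose Y)"
    using minimal_face_rel_interior[OF SDP_set_convex outer_in_SDP_set[OF Y]] rel_interior_subset by auto
  have "Y ** transpose Y + L W \<in> SDP_set A b" if "W \<in> V" "norm W < 1" for W
    using sandwich_in_SDP_set[OF Y, of W] that
    by (simp add: V_def L_def matrix_add_ldistrib matrix_add_rdistrib)
  from dim_le_aff_dim_face[OF F X V L \<open>inj L\<close> zero_less_one this]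
  show ?thesis by (simp add: V_def)
qed

lemma tangent_outer_exists_rank_deficient:
  assumes "\<not> inj ((*v) (Y::real^'p^'n))"
  shows "\<exists>z W. z \<noteq> 0 \<and> outer u z + Y ** W \<in> tangent A Y"
proof -
  obtain z where z: "z \<noteq> 0" "Y *v z = 0"
    using assms linear_inj_iff_eq_0[of "(*v) Y"] by auto
  then have "outer u z + Y ** 0 \<in> tangent A Y"
    by (simp add: tangent_def minner_eq_inner inner_outer matrix_vector_mul_assoc[symmetric])
  then show ?thesis using z by blast
qed

lemma dim_range_constraint_sandwich_le:
  fixes A :: "'m::finite \<Rightarrow> real^'n^'n" and Y :: "real^'p^'n"
  assumes none: "\<And>z W. outer u z + Y ** W \<in> tangent A Y \<Longrightarrow> z = 0"
  shows "CARD('p) + dim (range (\<lambda>W :: real^'p^'p. constraint_diff A Y (Y ** W)))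
           \<le> dim (span (AY_family A Y))"
proof -
  define G where "G = constraint_diff A Y"
  define \<Phi> where "\<Phi> = (\<lambda>W :: real^'p^'p. G (Y ** W))"
  have G: "linear G" unfolding G_def by (rule linear_constraint_diff)
  have lin: "linear (G \<circ> outer u)" "linear \<Phi>"
    using linear_compose[OF linear_outer G] linear_compose[OF linear_matrix_mul_left G]
    by (simp_all add: \<Phi>_def o_def)
  have sum: "G (outer u z) + \<Phi> W = G (outer u z + Y ** W)" for z W
    by (simp add: \<Phi>_def linear_add[OF G])
  have only_zero: "z = 0" if "(G \<circ> outer u) z + \<Phi> W = 0" for z W
  proof -
    have "G (outer u z + Y ** W) = 0"
      using that sum by simp
    then have "outer u z + Y ** W \<in> tangent A Y"
      by (simp add: tangent_eq_kernel G_def)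
    then show ?thesis by (rule none)
  qed
  have "CARD('p) + dim (range \<Phi>)
          \<le> dim {x + y |x y. x \<in> range (G \<circ> outer u) \<and> y \<in> range \<Phi>}"
    using dim_add_dim_range_le[OF lin only_zero] by simp
  also have "\<dots> \<le> dim (range G)"
    by (rule dim_subset) (auto simp: sum)
  also have "\<dots> \<le> dim (span (AY_family A Y))"
    unfolding G_def by (rule dim_range_constraint_diff_le)
  finally show ?thesis by (simp add: \<Phi>_def G_def)
qed

lemma tangent_outer_exists_full_rank:
  fixes A :: "'m::finite \<Rightarrow> real^'n^'n" and Y :: "real^'p^'n"
  assumes Y: "Y \<in> Mp A b" and injY: "inj ((*v) Y)"
    and small_face: "real_of_int (aff_dim (minimal_face (SDP_set A b) (Y ** transpose Y)))
          < real CARD('p) * (real CARD('p) + 1) / 2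
            - real (dim (span (AY_family A Y))) + real CARD('p)"
  shows "\<exists>z W. z \<noteq> 0 \<and> outer u z + Y ** W \<in> tangent A Y"
proof (rule ccontr)
  assume none: "\<not> ?thesis"
  define \<Phi> where "\<Phi> = (\<lambda>W :: real^'p^'p. constraint_diff A Y (Y ** W))"
  define Sym where "Sym = {W :: real^'p^'p. transpose W = W}"
  have range_bound: "CARD('p) + dim (range \<Phi>) \<le> dim (span (AY_family A Y))"
    unfolding \<Phi>_def by (rule dim_range_constraint_sandwich_le) (use none in blast)
  have "linear \<Phi>"
    using linear_compose[OF linear_matrix_mul_left linear_constraint_diff] by (simp add: \<Phi>_def o_def)
  have "dim Sym \<le> dim (Sym \<inter> {W. \<Phi> W = 0}) + dim (\<Phi> ` Sym)"
    unfolding Sym_def by (rule dim_le_dim_kernel_add_dim_image[OF subspace_symmetric_matrices \<open>linear \<Phi>\<close>])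
  moreover have "dim (\<Phi> ` Sym) \<le> dim (range \<Phi>)"
    by (rule dim_subset) auto
  ultimately have kernel_bound:
    "real (dim Sym) \<le> real (dim (Sym \<inter> {W. \<Phi> W = 0})) + real (dim (range \<Phi>))"
    by linarith
  have "int (dim (Sym \<inter> {W. \<Phi> W = 0})) \<le> aff_dim (minimal_face (SDP_set A b) (Y ** transpose Y))"
    using dim_symmetric_kernel_le_aff_dim_face[OF Y injY]
    by (simp add: Sym_def \<Phi>_def Int_def conj_commute)
  then have face_bound: "real (dim (Sym \<inter> {W. \<Phi> W = 0}))
      \<le> real_of_int (aff_dim (minimal_face (SDP_set A b) (Y ** transpose Y)))"
    by linarith
  have "real (CARD('p) * (CARD('p) + 1)) \<le> real (2 * dim Sym)"
    unfolding Sym_def of_nat_le_iff by (rule dim_symmetric_matrices_ge)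
  then have "real CARD('p) * (real CARD('p) + 1) \<le> 2 * real (dim Sym)"
    by (simp add: algebra_simps)
  then show False
    using range_bound kernel_bound face_bound small_face by linarith
qed

lemma quadratic_form_nonneg_of_tangent_outer:
  fixes S :: "real^'n^'n" and Y :: "real^'p^'n"
  assumes S: "symmetric_mat S" and SY: "S ** Y = 0" and z: "z \<noteq> 0"
    and curv: "0 \<le> minner (outer u z + Y ** W) (S ** (outer u z + Y ** W))"
  shows "0 \<le> u \<bullet> (S *v u)"
proof -
  have "(Y ** W) \<bullet> outer (S *v u) z = (S *v u) \<bullet> (Y *v (W *v z))"
    by (simp add: inner_outer matrix_vector_mul_assoc)
  also have "\<dots> = u \<bullet> (S *v (Y *v (W *v z)))"
    using symmetric_mat_inner_swap[OF S, of "Y *v (W *v z)" u] by (simp add: inner_commute)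
  also have "\<dots> = u \<bullet> ((S ** Y) *v (W *v z))"
    by (simp add: matrix_vector_mul_assoc matrix_mul_assoc)
  finally have cross: "(Y ** W) \<bullet> outer (S *v u) z = 0" by (simp add: SY)
  have "S ** (outer u z + Y ** W) = outer (S *v u) z"
    by (simp add: matrix_add_ldistrib matrix_mul_outer matrix_mul_assoc SY)
  then have "0 \<le> (u \<bullet> (S *v u)) * (z \<bullet> z)"
    using curv by (simp add: minner_eq_inner inner_add_left cross inner_outer_outer)
  moreover have "0 < z \<bullet> z"
    using z by simp
  ultimately show ?thesis
    by (simp add: zero_le_mult_iff)
qed

lemma minner_SDP_set:
  fixes A :: "'m::finite \<Rightarrow> real^'n^'n"
  assumes "X \<in> SDP_set A b"
  shows "minner C X = Smat A C Y \<bullet> X + mult_mu A C Y \<bullet> b"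
proof -
  have "A k \<bullet> X = b$k" for k
    using assms by (auto simp: SDP_set_def Aop_def minner_eq_inner)
  then have "Aadj A (mult_mu A C Y) \<bullet> X = mult_mu A C Y \<bullet> b"
    by (simp add: Aadj_def inner_sum_left inner_vec_def[of "mult_mu A C Y"])
  then show ?thesis
    by (simp add: Smat_def minner_eq_inner inner_diff_left)
qed

lemma global_optimal_of_psd_Smat:
  fixes A :: "'m::finite \<Rightarrow> real^'n^'n" and Y :: "real^'p^'n"
  assumes Y: "Y \<in> Mp A b" and SY: "Smat A C Y ** Y = 0" and S: "psd (Smat A C Y)"
  shows "(\<forall>Z :: real^'p^'n \<in> Mp A b. gobj C Y \<le> gobj C Z) \<and>
         Y ** transpose Y \<in> SDP_set A b \<and>
         (\<forall>X' \<in> SDP_set A b. minner C (Y ** transpose Y) \<le> minner C X')"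
proof -
  have X: "Y ** transpose Y \<in> SDP_set A b" by (rule outer_in_SDP_set[OF Y])
  have "Smat A C Y \<bullet> (Y ** transpose Y) = 0"
    using minner_sandwich[of "Smat A C Y" Y "mat 1"] by (simp add: SY minner_eq_inner)
  then have SDP_opt: "minner C (Y ** transpose Y) \<le> minner C X'" if "X' \<in> SDP_set A b" for X'
    using minner_SDP_set[OF X, of C Y] minner_SDP_set[OF that, of C Y]
      inner_psd_nonneg[OF S, of X'] that
    by (simp add: SDP_set_def)
  have "gobj C Y \<le> gobj C Z" if "Z \<in> Mp A b" for Z :: "real^'p^'n"
    using SDP_opt[OF outer_in_SDP_set[OF that]] by (simp add: gobj_eq_minner)
  then show ?thesis using X SDP_opt by blast
qed

theorem theorem3:
  fixes A :: "'m::finite \<Rightarrow> real^'n^'n"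
    and b :: "real^'m"
    and C :: "real^'n^'n"
    and Y :: "real^'p^'n"
  assumes symA: "\<forall>i. symmetric_mat (A i)"
    and symC: "symmetric_mat C"
    and asm1: "assumption1 A b TYPE('p)"
    and Y_in: "Y \<in> Mp A b"
    and soc: "second_order_critical A C Y"
    and cond: "rank Y < CARD('p) \<or>
       (rank Y = CARD('p) \<and>
        real_of_int (aff_dim (minimal_face (SDP_set A b) (Y ** transpose Y)))
          < real CARD('p) * (real CARD('p) + 1) / 2
            - real (dim (span (AY_family A Y))) + real CARD('p))"
  shows "(\<forall>Z :: real^'p^'n \<in> Mp A b. gobj C Y \<le> gobj C Z) \<and>
         Y ** transpose Y \<in> SDP_set A b \<and>
         (\<forall>X' \<in> SDP_set A b. minner C (Y ** transpose Y) \<le> minner C X')"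
proof -
  have SY: "Smat A C Y ** Y = 0"
    and curv: "\<forall>D \<in> tangent A Y. 0 \<le> minner D (Smat A C Y ** D)"
    using soc unfolding second_order_critical_def by auto
  have S: "symmetric_mat (Smat A C Y)"
    by (rule Smat_symmetric[OF symA symC])
  have "0 \<le> u \<bullet> (Smat A C Y *v u)" for u
  proof -
    have "\<exists>z W. z \<noteq> 0 \<and> outer u z + Y ** W \<in> tangent A Y"
    proof (cases "inj ((*v) Y)")
      case True
      then show ?thesis
        using cond full_rank_injective[of Y] tangent_outer_exists_full_rank[OF Y_in True] by auto
    next
      case False
      then show ?thesis by (rule tangent_outer_exists_rank_deficient)
    qed
    then show ?thesis
      using quadratic_form_nonneg_of_tangent_outer[OF S SY] curv by blast
  qed
  then have "psd (Smat A C Y)"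
    using S by (simp add: psd_def)
  then show ?thesis
    by (rule global_optimal_of_psd_Smat[OF Y_in SY])
qed

end
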